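(* Let $L=\sum_{k=1}^m P_{n_k}$ be a linear forest and $n$ a positive integer. Then $L\in\operatorname{obs}(P_n)$ if and only if one of the following holds: (1) $\mu(L)=n+1$ and $n_k=2$ for all $k\in\{1,\dots,m\}$; (2) $\mu(L)=n+1$, $n_k\in\{1,2,4,6\}$ for all $k$, and $m_1=1$; (3) $\mu(L)=n+2$, $n_k\in\{1,2,4\}$ for all $k$, and $m_1=1$.
   Context: All graphs are finite, simple and loopless. $P_n$ denotes the path on $n$ vertices ($P_1=K_1$, $P_2=K_2$). A linear forest is a disjoint union of paths; $\sum_{k=1}^m P_{n_k}$ denotes the linear forest whose $k$-th component is the path on $n_k$ vertices, and $m_i$ denotes the number of indices $k$ with $n_k=i$. A full-homomorphism $\varphi\colon G\to H$ is a map $V(G)\to V(H)$ such that for all $x,y\in V(G)$, $xy\in E(G)$ if and only if $\varphi(x)\varphi(y)\in E(H)$. A full $H$-colouring of $G$ is a full-homomorphism $G\to H$. A minimal $H$-obstruction is a graph $G$ that admits no full $H$-colouring while every proper induced subgraph of $G$ admits one; $\operatorname{obs}(H)$ denotes the set of minimal $H$-obstructions (up to isomorphism). For a linear forest $L$, $\mu(L)$ is the minimum integer $n$ such that there is an injective full-homomorphism from $L$ to $P_n$. *)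

theory Defs
  imports Main
begin

type_synonym 'a graph = "'a set \<times> ('a \<Rightarrow> 'a \<Rightarrow> bool)"

definition verts :: "'a graph \<Rightarrow> 'a set" where
  "verts G = fst G"

definition adj :: "'a graph \<Rightarrow> 'a \<Rightarrow> 'a \<Rightarrow> bool" where
  "adj G = snd G"

definition full_hom :: "'a graph \<Rightarrow> 'b graph \<Rightarrow> ('a \<Rightarrow> 'b) \<Rightarrow> bool" where
  "full_hom G H f \<longleftrightarrow>
     (\<forall>x\<in>verts G. f x \<in> verts H) \<and>
     (\<forall>x\<in>verts G. \<forall>y\<in>verts G. adj G x y \<longleftrightarrow> adj H (f x) (f y))"

definition induced_subgraph :: "'a graph \<Rightarrow> 'a set \<Rightarrow> 'a graph" where
  "induced_subgraph G S = (S \<inter> verts G, \<lambda>x y. x \<in> S \<and> y \<in> S \<and> adj G x y)"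

definition min_obs :: "'a graph \<Rightarrow> 'b graph \<Rightarrow> bool" where
  "min_obs G H \<longleftrightarrow>
     \<not> (\<exists>f. full_hom G H f) \<and>
     (\<forall>S. S \<subset> verts G \<longrightarrow> (\<exists>f. full_hom (induced_subgraph G S) H f))"

definition path_graph :: "nat \<Rightarrow> nat graph" where
  "path_graph n = ({0..<n}, \<lambda>i j. i < n \<and> j < n \<and> (i + 1 = j \<or> j + 1 = i))"

text \<open>The linear forest sum_k P_{n_k}, given by the list [n_1,...,n_m];
vertex (k,i) is the i-th vertex of the k-th path.\<close>
definition linear_forest :: "nat list \<Rightarrow> (nat \<times> nat) graph" where
  "linear_forest ns =
     ({(k, i). k < length ns \<and> i < ns ! k},
      \<lambda>(k, i) (k', i'). k < length ns \<and> k' = k \<and> i < ns ! k \<and> i' < ns ! k \<and>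
                         (i + 1 = i' \<or> i' + 1 = i))"

definition mu :: "'a graph \<Rightarrow> nat" where
  "mu L = (LEAST n. \<exists>f. inj_on f (verts L) \<and> full_hom L (path_graph n) f)"

end

theory Submission
  imports Defs
begin

text \<open>A full homomorphism of a linear forest into \<open>P\<^sub>n\<close> identifies two vertices of a
  component only if they are the ends of a \<open>P\<^sub>3\<close>, and it sends different components to
  sets of vertices at distance at least 2, except that isolated vertices may share their image.
  Charging every image together with the vertex following it shows that such a homomorphism
  exists iff \<open>colour_cost ns \<le> n + 1\<close>, and likewise \<open>\<mu> = embed_cost ns - 1\<close>.
  Deleting a vertex splits its component in two, so a minimal obstruction is a forest whose
  colour cost exceeds \<open>n + 1\<close> while every single deletion brings it down to at most \<open>n + 1\<close>.
  Some deletion fails to lower the cost unless all components have 1, 2, 4 or 6 vertices, at most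
  one is isolated, and all are edges when none is; for such forests the least decrease is 1 or 2,
  which pins down \<open>n\<close>.\<close>

lemma verts_linear_forest [simp]:
  "(k, i) \<in> verts (linear_forest ns) \<longleftrightarrow> k < length ns \<and> i < ns ! k"
  by (simp add: verts_def linear_forest_def)

lemma adj_linear_forest [simp]:
  "adj (linear_forest ns) (k, i) (k', j) \<longleftrightarrow>
     k < length ns \<and> k' = k \<and> i < ns ! k \<and> j < ns ! k \<and> (i + 1 = j \<or> j + 1 = i)"
  by (simp add: adj_def linear_forest_def)

lemma verts_path_graph [simp]: "verts (path_graph n) = {0..<n}"
  by (simp add: verts_def path_graph_def)

lemma adj_path_graph [simp]:
  "adj (path_graph n) a b \<longleftrightarrow> a < n \<and> b < n \<and> (a + 1 = b \<or> b + 1 = a)"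
  by (simp add: adj_def path_graph_def)

lemma verts_induced_subgraph [simp]: "verts (induced_subgraph G S) = S \<inter> verts G"
  by (simp add: verts_def induced_subgraph_def)

lemma adj_induced_subgraph [simp]:
  "adj (induced_subgraph G S) x y \<longleftrightarrow> x \<in> S \<and> y \<in> S \<and> adj G x y"
  by (simp add: adj_def induced_subgraph_def)

lemma full_hom_comp: "full_hom G H f \<Longrightarrow> full_hom H K g \<Longrightarrow> full_hom G K (g \<circ> f)"
  unfolding full_hom_def by auto

lemma full_hom_induced_subgraph_mono:
  "S \<subseteq> T \<Longrightarrow> full_hom (induced_subgraph G S) (induced_subgraph G T) id"
  unfolding full_hom_def by auto

lemma full_hom_verts: "full_hom G H f \<Longrightarrow> x \<in> verts G \<Longrightarrow> f x \<in> verts H"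
  unfolding full_hom_def by blast

lemma full_hom_adj:
  "full_hom G H f \<Longrightarrow> x \<in> verts G \<Longrightarrow> y \<in> verts G \<Longrightarrow> adj G x y \<longleftrightarrow> adj H (f x) (f y)"
  unfolding full_hom_def by blast

lemma full_hom_same_image_adj:
  assumes "full_hom G H f" "x \<in> verts G" "y \<in> verts G" "z \<in> verts G" "f x = f y"
  shows "adj G x z \<longleftrightarrow> adj G y z"
  using full_hom_adj[OF assms(1,2,4)] full_hom_adj[OF assms(1,3,4)] assms(5) by simp

lemma full_hom_linear_forest_path_graphI:
  assumes range: "\<And>k i. k < length ns \<Longrightarrow> i < ns ! k \<Longrightarrow> f (k, i) < n"
    and within: "\<And>k i j. k < length ns \<Longrightarrow> i < ns ! k \<Longrightarrow> j < ns ! k \<Longrightarrow>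
        (f (k, i) + 1 = f (k, j) \<or> f (k, j) + 1 = f (k, i)) \<longleftrightarrow> (i + 1 = j \<or> j + 1 = i)"
    and across: "\<And>k i k' j. k < length ns \<Longrightarrow> i < ns ! k \<Longrightarrow> k' < length ns \<Longrightarrow> j < ns ! k' \<Longrightarrow>
        k \<noteq> k' \<Longrightarrow> f (k, i) + 1 \<noteq> f (k', j)"
  shows "full_hom (linear_forest ns) (path_graph n) f"
  unfolding full_hom_def
proof (intro conjI ballI)
  fix x assume "x \<in> verts (linear_forest ns)"
  then show "f x \<in> verts (path_graph n)" using range by (cases x) auto
next
  fix x y assume "x \<in> verts (linear_forest ns)" "y \<in> verts (linear_forest ns)"
  then obtain k i k' j where xy: "x = (k, i)" "y = (k', j)" "k < length ns" "i < ns ! k"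
    "k' < length ns" "j < ns ! k'"
    by (cases x, cases y) auto
  then show "adj (linear_forest ns) x y \<longleftrightarrow> adj (path_graph n) (f x) (f y)"
    using range within[of k i j] across[of k i k' j] across[of k' j k i]
    by (cases "k = k'") auto
qed

lemma sum_list_take_nth_le:
  fixes w :: "'a \<Rightarrow> nat"
  assumes "k < length xs" "k < k'"
  shows "(\<Sum>x\<leftarrow>take k xs. w x) + w (xs ! k) \<le> (\<Sum>x\<leftarrow>take k' xs. w x)"
proof -
  obtain d where d: "k' = Suc k + d" using \<open>k < k'\<close> less_iff_Suc_add by blast
  have "(\<Sum>x\<leftarrow>take (Suc k) xs. w x) \<le> (\<Sum>x\<leftarrow>take k' xs. w x)"
    unfolding d take_add by simp
  then show ?thesis using assms(1) by (simp add: take_Suc_conv_app_nth)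
qed

lemma sum_list_map_eq_sum_indices:
  fixes w :: "'a \<Rightarrow> 'b::comm_monoid_add"
  assumes "\<And>x. x \<in> set xs \<Longrightarrow> \<not> P x \<Longrightarrow> w x = 0"
  shows "(\<Sum>x\<leftarrow>xs. w x) = (\<Sum>k | k < length xs \<and> P (xs ! k). w (xs ! k))"
proof -
  have "(\<Sum>x\<leftarrow>xs. w x) = (\<Sum>k<length xs. w (xs ! k))"
    by (simp add: sum_list_sum_nth atLeast0LessThan)
  also have "\<dots> = (\<Sum>k | k < length xs \<and> P (xs ! k). w (xs ! k))"
    using assms by (intro sum.mono_neutral_right) auto
  finally show ?thesis .
qed

text \<open>A component is charged for its image plus the unused vertex separating it from the next
  component. Under a full homomorphism \<open>P\<^sub>3\<close> may fold onto an edge, and all isolated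
  vertices may share one vertex, which \<open>colour_cost\<close> charges once.\<close>

definition colour_width :: "nat \<Rightarrow> nat" where
  "colour_width s = (if s \<le> 1 then 0 else if s = 3 then 3 else s + 1)"

definition embed_width :: "nat \<Rightarrow> nat" where
  "embed_width s = (if s = 0 then 0 else s + 1)"

definition colour_cost :: "nat list \<Rightarrow> nat" where
  "colour_cost ns = (\<Sum>s\<leftarrow>ns. colour_width s) + (if 1 \<in> set ns then 2 else 0)"

definition embed_cost :: "nat list \<Rightarrow> nat" where
  "embed_cost ns = (\<Sum>s\<leftarrow>ns. embed_width s)"

lemma embedding_exists:
  assumes "embed_cost ns \<le> n + 1"
  shows "\<exists>f. inj_on f (verts (linear_forest ns)) \<and> full_hom (linear_forest ns) (path_graph n) f"
proof -
  define f where "f = (\<lambda>(k, i). (\<Sum>s\<leftarrow>take k ns. embed_width s) + i)"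
  have gap: "f (k, i) + 2 \<le> f (k', j)"
    if "k < length ns" "i < ns ! k" "k < k'" for k i k' j
    using sum_list_take_nth_le[OF that(1,3), of embed_width] that(2)
    by (simp add: f_def embed_width_def)
  have range: "f (k, i) < n" if "k < length ns" "i < ns ! k" for k i
    using sum_list_take_nth_le[OF that(1) that(1), of embed_width] that(2) assms
    by (simp add: f_def embed_width_def embed_cost_def)
  have "full_hom (linear_forest ns) (path_graph n) f"
  proof (rule full_hom_linear_forest_path_graphI)
    show "f (k, i) < n" if "k < length ns" "i < ns ! k" for k i
      using range that .
    show "f (k, i) + 1 \<noteq> f (k', j)"
      if "k < length ns" "i < ns ! k" "k' < length ns" "j < ns ! k'" "k \<noteq> k'" for k i k' j
      using gap[of k i k' j] gap[of k' j k i] that by linarith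
  qed (auto simp: f_def)
  moreover have "inj_on f (verts (linear_forest ns))"
  proof (rule inj_onI, clarify)
    fix k i k' j
    assume "(k, i) \<in> verts (linear_forest ns)" "(k', j) \<in> verts (linear_forest ns)"
      "f (k, i) = f (k', j)"
    then show "k = k' \<and> i = j"
      using gap[of k i k' j] gap[of k' j k i] by (cases k k' rule: linorder_cases) (auto simp: f_def)
  qed
  ultimately show ?thesis by blast
qed

definition fold_path3 :: "nat \<Rightarrow> nat \<Rightarrow> nat" where
  "fold_path3 s i = (if s = 3 \<and> i = 2 then 0 else i)"

lemma fold_path3_adj:
  assumes "i < s" "j < s"
  shows "(fold_path3 s i + 1 = fold_path3 s j \<or> fold_path3 s j + 1 = fold_path3 s i)
    \<longleftrightarrow> (i + 1 = j \<or> j + 1 = i)"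
proof (cases "s = 3")
  case True
  then have "i \<in> {0, 1, 2}" "j \<in> {0, 1, 2}" using assms by auto
  then show ?thesis using True by (auto simp: fold_path3_def)
qed (simp add: fold_path3_def)

lemma fold_path3_width: "s \<noteq> 1 \<Longrightarrow> i < s \<Longrightarrow> fold_path3 s i + 2 \<le> colour_width s"
  by (auto simp: fold_path3_def colour_width_def)

lemma colouring_exists:
  assumes cost: "colour_cost ns \<le> n + 1"
  shows "\<exists>f. full_hom (linear_forest ns) (path_graph n) f"
proof -
  \<comment> \<open>Lay the other components out left to right, each followed by its gap vertex, and send
    every isolated vertex to the first vertex after the last gap.\<close>
  define H where "H = (\<Sum>s\<leftarrow>ns. colour_width s)"
  define f where "f = (\<lambda>(k, i). if ns ! k = 1 then H
    else (\<Sum>s\<leftarrow>take k ns. colour_width s) + fold_path3 (ns ! k) i)"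
  have gap: "f (k, i) + 2 \<le> (\<Sum>s\<leftarrow>take k' ns. colour_width s)"
    if "k < length ns" "i < ns ! k" "ns ! k \<noteq> 1" "k < k'" for k i k'
    using sum_list_take_nth_le[OF that(1,4), of colour_width] fold_path3_width[OF that(3,2)] that(3)
    by (simp add: f_def)
  have before_isolated: "f (k, i) + 2 \<le> H" if "k < length ns" "i < ns ! k" "ns ! k \<noteq> 1" for k i
    using gap[OF that that(1)] by (simp add: H_def)
  have isolated_fits: "H < n" if "k < length ns" "ns ! k = 1" for k
    using cost nth_mem[OF that(1)] that(2) by (auto simp: colour_cost_def H_def)
  have range: "f (k, i) < n" if "k < length ns" "i < ns ! k" for k i
  proof (cases "ns ! k = 1")
    case True
    then show ?thesis using isolated_fits[OF that(1)] by (simp add: f_def)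
  next
    case False
    then show ?thesis using before_isolated[OF that False] cost by (simp add: colour_cost_def H_def)
  qed
  have apart: "f (k, i) + 1 \<noteq> f (k', j)"
    if "k < length ns" "i < ns ! k" "k' < length ns" "j < ns ! k'" "k \<noteq> k'" for k i k' j
  proof (cases "ns ! k = 1"; cases "ns ! k' = 1")
    assume "ns ! k \<noteq> 1" "ns ! k' \<noteq> 1"
    then show ?thesis
      using gap[of k i k'] gap[of k' j k] that by (cases "k < k'") (auto simp: f_def)
  qed (use before_isolated that in \<open>force simp: f_def\<close>)+
  have "full_hom (linear_forest ns) (path_graph n) f"
  proof (rule full_hom_linear_forest_path_graphI)
    show "(f (k, i) + 1 = f (k, j) \<or> f (k, j) + 1 = f (k, i)) \<longleftrightarrow> (i + 1 = j \<or> j + 1 = i)"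
      if "k < length ns" "i < ns ! k" "j < ns ! k" for k i j
      using fold_path3_adj[OF that(2,3)] that by (auto simp: f_def)
  qed (fact range apart)+
  then show ?thesis by blast
qed

definition separated :: "nat set \<Rightarrow> nat set \<Rightarrow> bool" where
  "separated X Y \<longleftrightarrow> (\<forall>a\<in>X. \<forall>b\<in>Y. a \<noteq> b \<and> a \<noteq> Suc b \<and> b \<noteq> Suc a)"

lemma card_union_Suc_image:
  assumes "finite X" "X \<noteq> {}"
  shows "card X + 1 \<le> card (X \<union> Suc ` X)"
proof -
  have "Suc (Max X) \<notin> X" using Max_ge[OF assms(1)] by fastforce
  then have "card (insert (Suc (Max X)) X) = card X + 1" using assms(1) by simp
  moreover have "insert (Suc (Max X)) X \<subseteq> X \<union> Suc ` X" using assms by simp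
  ultimately show ?thesis using assms(1) by (metis card_mono finite_Un finite_imageI)
qed

text \<open>Each member \<open>X\<close> of a separated family occupies \<open>X \<union> Suc ` X\<close>; these sets are
  disjoint subsets of \<open>{..n}\<close>.\<close>

lemma separated_family_bound:
  assumes "pairwise separated F" and "\<And>X. X \<in> F \<Longrightarrow> X \<noteq> {} \<and> X \<subseteq> {..<n}"
  shows "(\<Sum>X\<in>F. card X + 1) \<le> n + 1"
proof -
  define P where "P X = X \<union> Suc ` X" for X :: "nat set"
  have fin: "finite F" using assms(2) by (metis Pow_iff finite_Pow_iff finite_lessThan finite_subset subsetI)
  have finX: "finite X" if "X \<in> F" for X using assms(2)[OF that] finite_subset by blast
  have "(\<Sum>X\<in>F. card X + 1) \<le> (\<Sum>X\<in>F. card (P X))"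
    using card_union_Suc_image finX assms(2) by (intro sum_mono) (auto simp: P_def)
  also have "\<dots> = card (\<Union>(P ` F))"
  proof (rule card_UN_disjoint[symmetric, OF fin])
    show "\<forall>X\<in>F. finite (P X)" using finX by (simp add: P_def)
    show "\<forall>X\<in>F. \<forall>Y\<in>F. X \<noteq> Y \<longrightarrow> P X \<inter> P Y = {}"
      using assms(1) by (auto simp: pairwise_def separated_def P_def)
  qed
  also have "\<dots> \<le> card {..n}"
    using assms(2) by (intro card_mono) (fastforce simp: P_def)+
  finally show ?thesis by simp
qed

definition component_image :: "(nat \<times> nat \<Rightarrow> nat) \<Rightarrow> nat list \<Rightarrow> nat \<Rightarrow> nat set" where
  "component_image f ns k = (\<lambda>i. f (k, i)) ` {..<ns ! k}"

context
  fixes ns :: "nat list" and n :: nat and f :: "nat \<times> nat \<Rightarrow> nat"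
  assumes hom: "full_hom (linear_forest ns) (path_graph n) f"
begin

lemma component_image_subset: "k < length ns \<Longrightarrow> component_image f ns k \<subseteq> {..<n}"
  using full_hom_verts[OF hom] by (auto simp: component_image_def)

lemma image_distinct_components:
  assumes k: "k < length ns" "i < ns ! k" and k': "k' < length ns" "j < ns ! k'" and "k \<noteq> k'"
  shows "f (k, i) \<noteq> Suc (f (k', j))" and "f (k, i) = f (k', j) \<Longrightarrow> ns ! k = 1"
proof -
  have v: "(k, i) \<in> verts (linear_forest ns)" "(k', j) \<in> verts (linear_forest ns)"
    using k k' by simp_all
  show "f (k, i) \<noteq> Suc (f (k', j))"
    using full_hom_adj[OF hom v(2,1)] full_hom_verts[OF hom v(1)] \<open>k \<noteq> k'\<close> by auto
  assume eq: "f (k, i) = f (k', j)"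
  show "ns ! k = 1"
  proof (rule ccontr)
    assume "ns ! k \<noteq> 1"
    define z where "z = (k, if i + 1 < ns ! k then i + 1 else i - 1)"
    have z: "z \<in> verts (linear_forest ns)" "adj (linear_forest ns) (k, i) z"
      using k \<open>ns ! k \<noteq> 1\<close> by (auto simp: z_def)
    then show False
      using full_hom_same_image_adj[OF hom v z(1) eq] \<open>k \<noteq> k'\<close> by (simp add: z_def)
  qed
qed

text \<open>Two vertices of one component with the same image are twins, which in a path forces
  them to be the two ends of a \<open>P\<^sub>3\<close>.\<close>

lemma inj_on_component:
  assumes k: "k < length ns" and "ns ! k \<noteq> 3"
  shows "inj_on (\<lambda>i. f (k, i)) {..<ns ! k}"
proof -
  have no_collision: False if ij: "i < j" "j < ns ! k" "f (k, i) = f (k, j)" for i j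
  proof -
    have twins: "adj (linear_forest ns) (k, i) (k, a) \<longleftrightarrow> adj (linear_forest ns) (k, j) (k, a)"
      if "a < ns ! k" for a
    proof (rule full_hom_same_image_adj[OF hom _ _ _ ij(3)])
      show "(k, i) \<in> verts (linear_forest ns)" "(k, j) \<in> verts (linear_forest ns)"
        "(k, a) \<in> verts (linear_forest ns)"
        using k ij that by simp_all
    qed
    have "j = i + 2" using twins[of "i + 1"] ij k by auto
    moreover have "i = 0" using twins[of "i - 1"] ij k \<open>j = i + 2\<close> by (cases i) auto
    ultimately have "3 < ns ! k" using ij \<open>ns ! k \<noteq> 3\<close> by simp
    then show False using twins[of 3] k \<open>i = 0\<close> \<open>j = i + 2\<close> by simp
  qed
  show ?thesis
  proof (rule inj_onI)
    fix i j assume "i \<in> {..<ns ! k}" "j \<in> {..<ns ! k}" "f (k, i) = f (k, j)"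
    then show "i = j"
      using no_collision[of i j] no_collision[of j i] by (cases i j rule: linorder_cases) auto
  qed
qed

lemma colour_width_le_card_component_image:
  assumes k: "k < length ns" "2 \<le> ns ! k"
  shows "colour_width (ns ! k) \<le> card (component_image f ns k) + 1"
proof (cases "ns ! k = 3")
  case True
  have "adj (path_graph n) (f (k, 0)) (f (k, 1))"
    using full_hom_adj[OF hom, of "(k, 0)" "(k, 1)"] k True by simp
  then have "card {f (k, 0), f (k, 1)} = 2" by auto
  moreover have "{f (k, 0), f (k, 1)} \<subseteq> component_image f ns k"
    using True by (auto simp: component_image_def)
  ultimately have "2 \<le> card (component_image f ns k)"
    by (metis card_mono finite_imageI finite_lessThan component_image_def)
  then show ?thesis using True by (simp add: colour_width_def)
next
  case False
  then show ?thesis using inj_on_component[OF k(1) False] k(2)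
    by (simp add: component_image_def card_image colour_width_def)
qed

lemma separated_component_images:
  assumes "k < length ns" "k' < length ns"
    and "component_image f ns k \<noteq> component_image f ns k'"
  shows "separated (component_image f ns k) (component_image f ns k')"
  unfolding separated_def
proof (intro ballI)
  have "k \<noteq> k'" using assms(3) by auto
  fix a b assume "a \<in> component_image f ns k" "b \<in> component_image f ns k'"
  then obtain i j where ij: "i < ns ! k" "a = f (k, i)" "j < ns ! k'" "b = f (k', j)"
    by (auto simp: component_image_def)
  note distinct = image_distinct_components[OF assms(1) ij(1) assms(2) ij(3) \<open>k \<noteq> k'\<close>]
    image_distinct_components[OF assms(2) ij(3) assms(1) ij(1)] \<open>k \<noteq> k'\<close>
  have "a \<noteq> b"
  proof
    assume "a = b"
    then have "ns ! k = 1" "ns ! k' = 1" using distinct ij by auto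
    then show False using assms(3) ij \<open>a = b\<close> by (simp add: component_image_def)
  qed
  then show "a \<noteq> b \<and> a \<noteq> Suc b \<and> b \<noteq> Suc a" using distinct ij by auto
qed

lemma component_images_bound:
  "(\<Sum>X\<in>component_image f ns ` {k. k < length ns \<and> 1 \<le> ns ! k}. card X + 1) \<le> n + 1"
proof (rule separated_family_bound)
  show "pairwise separated (component_image f ns ` {k. k < length ns \<and> 1 \<le> ns ! k})"
    using separated_component_images by (auto simp: pairwise_def)
  show "X \<noteq> {} \<and> X \<subseteq> {..<n}" if "X \<in> component_image f ns ` {k. k < length ns \<and> 1 \<le> ns ! k}" for X
    using that component_image_subset by (auto simp: component_image_def lessThan_empty_iff)
qed

lemma colour_cost_le_if_full_hom: "colour_cost ns \<le> n + 1"
proof -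
  define B where "B = component_image f ns"
  define K1 where "K1 = {k. k < length ns \<and> 1 \<le> ns ! k}"
  define K2 where "K2 = {k. k < length ns \<and> 2 \<le> ns ! k}"
  have first_in_image: "f (k, 0) \<in> B k" if "1 \<le> ns ! k" for k
    using that by (auto simp: B_def component_image_def)
  have no_isolated_in_image: "f (k', 0) \<notin> B k" if "k \<in> K2" "k' < length ns" "ns ! k' = 1" for k k'
  proof
    assume "f (k', 0) \<in> B k"
    then obtain i where "i < ns ! k" "f (k, i) = f (k', 0)" by (auto simp: B_def component_image_def)
    moreover have "k \<noteq> k'" using that by (auto simp: K2_def)
    ultimately show False using image_distinct_components(2)[of k i k' 0] that by (simp add: K2_def)
  qed
  have "inj_on B K2"
  proof (rule inj_onI, rule ccontr)
    fix k k' assume "k \<in> K2" "k' \<in> K2" "B k = B k'" "k \<noteq> k'"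
    then obtain j where "j < ns ! k'" "f (k, 0) = f (k', j)"
      using first_in_image[of k] by (auto simp: B_def component_image_def K2_def)
    then show False
      using image_distinct_components(2)[of k 0 k' j] \<open>k \<in> K2\<close> \<open>k' \<in> K2\<close> \<open>k \<noteq> k'\<close>
      by (simp add: K2_def)
  qed
  have "(\<Sum>s\<leftarrow>ns. colour_width s) = (\<Sum>k\<in>K2. colour_width (ns ! k))"
    unfolding K2_def by (rule sum_list_map_eq_sum_indices) (simp add: colour_width_def)
  also have "\<dots> \<le> (\<Sum>k\<in>K2. card (B k) + 1)"
    using colour_width_le_card_component_image by (intro sum_mono) (simp add: K2_def B_def)
  also have "\<dots> = (\<Sum>X\<in>B ` K2. card X + 1)"
    by (simp add: sum.reindex[OF \<open>inj_on B K2\<close>])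
  finally have widths: "(\<Sum>s\<leftarrow>ns. colour_width s) \<le> (\<Sum>X\<in>B ` K2. card X + 1)" .
  have "B ` K2 \<subseteq> B ` K1" "finite (B ` K1)" by (auto simp: K1_def K2_def)
  show ?thesis
  proof (cases "1 \<in> set ns")
    case False
    then show ?thesis
      using widths sum_mono2[OF \<open>finite (B ` K1)\<close> \<open>B ` K2 \<subseteq> B ` K1\<close>, of "\<lambda>X. card X + 1"]
        component_images_bound
      by (simp add: colour_cost_def B_def K1_def)
  next
    case True
    then obtain k1 where k1: "k1 < length ns" "ns ! k1 = 1" by (auto simp: in_set_conv_nth)
    then have "B k1 = {f (k1, 0)}" by (auto simp: B_def component_image_def)
    moreover have "B k1 \<notin> B ` K2" using no_isolated_in_image k1 \<open>B k1 = {f (k1, 0)}\<close> by force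
    moreover have "insert (B k1) (B ` K2) \<subseteq> B ` K1" using k1 \<open>B ` K2 \<subseteq> B ` K1\<close> by (auto simp: K1_def)
    ultimately have "(\<Sum>X\<in>B ` K2. card X + 1) + 2 \<le> (\<Sum>X\<in>B ` K1. card X + 1)"
      using sum_mono2[OF \<open>finite (B ` K1)\<close>, of "insert (B k1) (B ` K2)" "\<lambda>X. card X + 1"]
      by (simp add: K2_def)
    then show ?thesis
      using widths True component_images_bound by (simp add: colour_cost_def B_def K1_def)
  qed
qed

lemma embed_cost_le_if_inj_full_hom:
  assumes inj: "inj_on f (verts (linear_forest ns))"
  shows "embed_cost ns \<le> n + 1"
proof -
  define B where "B = component_image f ns"
  define K1 where "K1 = {k. k < length ns \<and> 1 \<le> ns ! k}"
  have inj_component: "inj_on (\<lambda>i. f (k, i)) {..<ns ! k}" if "k < length ns" for k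
  proof (rule inj_onI)
    fix i j assume "i \<in> {..<ns ! k}" "j \<in> {..<ns ! k}" "f (k, i) = f (k, j)"
    then show "i = j" using inj_onD[OF inj, of "(k, i)" "(k, j)"] that by simp
  qed
  have "inj_on B K1"
  proof (rule inj_onI)
    fix k k' assume "k \<in> K1" "k' \<in> K1" "B k = B k'"
    then have "f (k, 0) \<in> B k'" by (auto simp: B_def component_image_def K1_def)
    then obtain j where "j < ns ! k'" "f (k, 0) = f (k', j)" by (auto simp: B_def component_image_def)
    then show "k = k'"
      using inj_onD[OF inj, of "(k, 0)" "(k', j)"] \<open>k \<in> K1\<close> \<open>k' \<in> K1\<close> by (simp add: K1_def)
  qed
  have "embed_cost ns = (\<Sum>k\<in>K1. embed_width (ns ! k))"
    unfolding embed_cost_def K1_def by (rule sum_list_map_eq_sum_indices) (simp add: embed_width_def)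
  also have "\<dots> = (\<Sum>k\<in>K1. card (B k) + 1)"
    using inj_component by (intro sum.cong) (auto simp: K1_def B_def component_image_def
        card_image embed_width_def)
  also have "\<dots> = (\<Sum>X\<in>B ` K1. card X + 1)"
    by (simp add: sum.reindex[OF \<open>inj_on B K1\<close>])
  finally show ?thesis using component_images_bound by (simp add: B_def K1_def)
qed

end

lemma full_colouring_iff:
  "(\<exists>f. full_hom (linear_forest ns) (path_graph n) f) \<longleftrightarrow> colour_cost ns \<le> n + 1"
  using colour_cost_le_if_full_hom colouring_exists by blast

lemma mu_linear_forest: "mu (linear_forest ns) = embed_cost ns - 1"
  unfolding mu_def
proof (rule Least_equality)
  show "\<exists>f. inj_on f (verts (linear_forest ns)) \<and>
      full_hom (linear_forest ns) (path_graph (embed_cost ns - 1)) f"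
    by (rule embedding_exists) simp
  show "embed_cost ns - 1 \<le> m"
    if "\<exists>f. inj_on f (verts (linear_forest ns)) \<and> full_hom (linear_forest ns) (path_graph m) f" for m
    using that embed_cost_le_if_inj_full_hom by fastforce
qed

text \<open>Deleting vertex \<open>i\<close> of component \<open>k\<close> leaves a path with \<open>i\<close> vertices in place of the
  component and appends one with the remaining \<open>ns ! k - 1 - i\<close> vertices.\<close>

definition delete_vertex :: "nat list \<Rightarrow> nat \<Rightarrow> nat \<Rightarrow> nat list" where
  "delete_vertex ns k i = ns[k := i] @ [ns ! k - 1 - i]"

lemma verts_delete_vertex:
  assumes "k0 < length ns"
  shows "(k, j) \<in> verts (linear_forest (delete_vertex ns k0 i0)) \<longleftrightarrow>
    (k < length ns \<and> k \<noteq> k0 \<and> j < ns ! k) \<or> (k = k0 \<and> j < i0) \<or>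
    (k = length ns \<and> j < ns ! k0 - 1 - i0)"
  using assms by (auto simp: delete_vertex_def nth_append nth_list_update less_Suc_eq)

lemma adj_delete_vertex:
  assumes "k0 < length ns"
  shows "adj (linear_forest (delete_vertex ns k0 i0)) (k, j) (k', j') \<longleftrightarrow>
    k' = k \<and> (j + 1 = j' \<or> j' + 1 = j) \<and>
    ((k < length ns \<and> k \<noteq> k0 \<and> j < ns ! k \<and> j' < ns ! k) \<or> (k = k0 \<and> j < i0 \<and> j' < i0) \<or>
     (k = length ns \<and> j < ns ! k0 - 1 - i0 \<and> j' < ns ! k0 - 1 - i0))"
  using assms by (auto simp: delete_vertex_def nth_append nth_list_update less_Suc_eq)

context
  fixes ns :: "nat list" and k0 i0 :: nat
  assumes k0: "k0 < length ns" and i0: "i0 < ns ! k0"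
begin

abbreviation (input) forest_minus_vertex :: "(nat \<times> nat) graph" where
  "forest_minus_vertex \<equiv> induced_subgraph (linear_forest ns) (verts (linear_forest ns) - {(k0, i0)})"

lemma adj_forest_minus_vertex:
  "adj forest_minus_vertex (k, j) (k', j') \<longleftrightarrow> (k, j) \<noteq> (k0, i0) \<and> (k', j') \<noteq> (k0, i0) \<and>
     k < length ns \<and> k' = k \<and> j < ns ! k \<and> j' < ns ! k \<and> (j + 1 = j' \<or> j' + 1 = j)"
  by auto

lemma full_hom_minus_vertex_to_delete_vertex:
  "full_hom forest_minus_vertex (linear_forest (delete_vertex ns k0 i0))
     (\<lambda>(k, j). if k = k0 \<and> i0 < j then (length ns, j - i0 - 1) else (k, j))"
  unfolding full_hom_def
proof (intro conjI ballI)
  fix x assume "x \<in> verts forest_minus_vertex"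
  then show "(case x of (k, j) \<Rightarrow> if k = k0 \<and> i0 < j then (length ns, j - i0 - 1) else (k, j))
      \<in> verts (linear_forest (delete_vertex ns k0 i0))"
    using k0 by (cases x) (auto simp: delete_vertex_def nth_append nth_list_update)
next
  fix x y assume "x \<in> verts forest_minus_vertex" "y \<in> verts forest_minus_vertex"
  then obtain k j k' j' where x: "x = (k, j)" "k < length ns" "j < ns ! k" "(k, j) \<noteq> (k0, i0)"
    and y: "y = (k', j')" "k' < length ns" "j' < ns ! k'" "(k', j') \<noteq> (k0, i0)"
    by (cases x, cases y) auto
  show "adj forest_minus_vertex x y \<longleftrightarrow> adj (linear_forest (delete_vertex ns k0 i0))
      (case x of (k, j) \<Rightarrow> if k = k0 \<and> i0 < j then (length ns, j - i0 - 1) else (k, j))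
      (case y of (k, j) \<Rightarrow> if k = k0 \<and> i0 < j then (length ns, j - i0 - 1) else (k, j))"
    unfolding x(1) y(1) using x(2-) y(2-) k0 i0
    by (cases "k = k0"; cases "k' = k0"; cases "i0 < j"; cases "i0 < j'";
        simp add: adj_forest_minus_vertex adj_delete_vertex[OF k0] del: adj_linear_forest adj_induced_subgraph;
        presburger)
qed

lemma full_hom_delete_vertex_to_minus_vertex:
  "full_hom (linear_forest (delete_vertex ns k0 i0)) forest_minus_vertex
     (\<lambda>(k, j). if k = length ns then (k0, j + i0 + 1) else (k, j))"
  unfolding full_hom_def
proof (intro conjI ballI)
  fix x assume "x \<in> verts (linear_forest (delete_vertex ns k0 i0))"
  then show "(case x of (k, j) \<Rightarrow> if k = length ns then (k0, j + i0 + 1) else (k, j)) \<in> verts forest_minus_vertex"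
    using k0 i0 by (cases x)
      (auto simp: delete_vertex_def nth_append nth_list_update less_Suc_eq split: if_split_asm)
next
  fix x y assume "x \<in> verts (linear_forest (delete_vertex ns k0 i0))"
    "y \<in> verts (linear_forest (delete_vertex ns k0 i0))"
  then obtain k j k' j' where x: "x = (k, j)" "(k < length ns \<and> k \<noteq> k0 \<and> j < ns ! k) \<or>
      (k = k0 \<and> j < i0) \<or> (k = length ns \<and> j < ns ! k0 - 1 - i0)"
    and y: "y = (k', j')" "(k' < length ns \<and> k' \<noteq> k0 \<and> j' < ns ! k') \<or>
      (k' = k0 \<and> j' < i0) \<or> (k' = length ns \<and> j' < ns ! k0 - 1 - i0)"
    by (cases x, cases y) (auto simp del: verts_linear_forest simp: verts_delete_vertex[OF k0])
  show "adj (linear_forest (delete_vertex ns k0 i0)) x y \<longleftrightarrow> adj forest_minus_vertex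
      (case x of (k, j) \<Rightarrow> if k = length ns then (k0, j + i0 + 1) else (k, j))
      (case y of (k, j) \<Rightarrow> if k = length ns then (k0, j + i0 + 1) else (k, j))"
    unfolding x(1) y(1) using x(2) y(2) k0 i0
    by (cases "k = length ns"; cases "k' = length ns"; cases "k = k0"; cases "k' = k0";
        simp add: adj_forest_minus_vertex adj_delete_vertex[OF k0] del: adj_linear_forest adj_induced_subgraph;
        presburger)
qed

lemma minus_vertex_colouring_iff:
  "(\<exists>f. full_hom forest_minus_vertex (path_graph n) f) \<longleftrightarrow> colour_cost (delete_vertex ns k0 i0) \<le> n + 1"
  using full_hom_comp[OF full_hom_minus_vertex_to_delete_vertex]
    full_hom_comp[OF full_hom_delete_vertex_to_minus_vertex] full_colouring_iff
  by blast

end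

lemma min_obs_linear_forest_iff:
  "min_obs (linear_forest ns) (path_graph n) \<longleftrightarrow>
     n + 1 < colour_cost ns \<and>
     (\<forall>k < length ns. \<forall>i < ns ! k. colour_cost (delete_vertex ns k i) \<le> n + 1)"
  (is "_ \<longleftrightarrow> _ \<and> ?deletions")
proof -
  let ?L = "linear_forest ns"
  have "(\<forall>S. S \<subset> verts ?L \<longrightarrow> (\<exists>f. full_hom (induced_subgraph ?L S) (path_graph n) f)) \<longleftrightarrow> ?deletions"
  proof (intro iffI allI impI)
    fix k i assume sub: "\<forall>S. S \<subset> verts ?L \<longrightarrow> (\<exists>f. full_hom (induced_subgraph ?L S) (path_graph n) f)"
      and ki: "k < length ns" "i < ns ! k"
    have "(k, i) \<in> verts ?L" using ki by simp
    then have "verts ?L - {(k, i)} \<subset> verts ?L" by blast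
    then have "\<exists>f. full_hom (induced_subgraph ?L (verts ?L - {(k, i)})) (path_graph n) f"
      using sub by blast
    then show "colour_cost (delete_vertex ns k i) \<le> n + 1" using minus_vertex_colouring_iff[OF ki] by simp
  next
    fix S assume ?deletions and "S \<subset> verts ?L"
    then obtain v where v: "v \<in> verts ?L" "v \<notin> S" by blast
    then obtain k i where ki: "k < length ns" "i < ns ! k" "S \<subseteq> verts ?L - {(k, i)}"
      using \<open>S \<subset> verts ?L\<close> by (cases v) auto
    then obtain f where "full_hom (induced_subgraph ?L (verts ?L - {(k, i)})) (path_graph n) f"
      using minus_vertex_colouring_iff[OF ki(1,2)] \<open>?deletions\<close> by blast
    then show "\<exists>f. full_hom (induced_subgraph ?L S) (path_graph n) f"
      using full_hom_comp[OF full_hom_induced_subgraph_mono[OF ki(3)]] by blast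
  qed
  then show ?thesis unfolding min_obs_def full_colouring_iff by auto
qed

lemma sum_list_map_update:
  fixes w :: "'a \<Rightarrow> 'b::comm_monoid_add"
  shows "k < length xs \<Longrightarrow> (\<Sum>x\<leftarrow>xs[k := a]. w x) + w (xs ! k) = (\<Sum>x\<leftarrow>xs. w x) + w a"
  by (induction xs arbitrary: k) (auto simp: add_ac split: nat.split)

lemma count_list_eq_sum_list: "count_list xs y = (\<Sum>x\<leftarrow>xs. if x = y then 1 else 0)"
  by (induction xs) auto

lemma sum_list_delete_vertex:
  "k < length ns \<Longrightarrow> (\<Sum>s\<leftarrow>delete_vertex ns k i. w s) + w (ns ! k) =
     (\<Sum>s\<leftarrow>ns. w s) + w i + (w (ns ! k - 1 - i) :: nat)"
  using sum_list_map_update[of k ns w i] by (simp add: delete_vertex_def)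

lemma count_list_delete_vertex:
  "k < length ns \<Longrightarrow> count_list (delete_vertex ns k i) 1 + (if ns ! k = 1 then 1 else 0) =
     count_list ns 1 + (if i = 1 then 1 else 0) + (if ns ! k - 1 - i = 1 then 1 else 0)"
  using sum_list_delete_vertex[of k ns "\<lambda>s. if s = 1 then 1 else 0" i]
  by (simp add: count_list_eq_sum_list)

lemma colour_cost_count_list:
  "colour_cost ns = (\<Sum>s\<leftarrow>ns. colour_width s) + (if count_list ns 1 = 0 then 0 else 2)"
  by (simp add: colour_cost_def count_list_0_iff)

lemma colour_cost_delete_vertex:
  assumes "k < length ns"
  shows "colour_cost (delete_vertex ns k i) + colour_width (ns ! k) +
      (if count_list ns 1 = 0 then 0 else 2) =
    colour_cost ns + colour_width i + colour_width (ns ! k - 1 - i) +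
      (if count_list (delete_vertex ns k i) 1 = 0 then 0 else 2)"
  using sum_list_delete_vertex[OF assms, of colour_width i] by (simp add: colour_cost_count_list)

lemma colour_cost_delete_isolated:
  assumes "k < length ns" "ns ! k = 1" "2 \<le> count_list ns 1"
  shows "colour_cost (delete_vertex ns k 0) = colour_cost ns"
  using colour_cost_delete_vertex[OF assms(1), of 0] count_list_delete_vertex[OF assms(1), of 0] assms(2,3)
  by (simp add: colour_width_def)

lemma colour_cost_delete_odd_or_long:
  assumes k: "k < length ns" and "1 \<le> ns ! k" "ns ! k \<notin> {1, 2, 4, 6}"
  defines "i \<equiv> if ns ! k = 3 then 0 else 2"
  shows "colour_cost (delete_vertex ns k i) = colour_cost ns"
proof -
  have "ns ! k = 3 \<or> ns ! k = 5 \<or> 7 \<le> ns ! k" using assms(2,3) by auto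
  then have "colour_width i + colour_width (ns ! k - 1 - i) = colour_width (ns ! k)"
    "i \<noteq> 1" "ns ! k - 1 - i \<noteq> 1" "ns ! k \<noteq> 1"
    by (auto simp: i_def colour_width_def)
  then show ?thesis
    using colour_cost_delete_vertex[OF k, of i] count_list_delete_vertex[OF k, of i] by simp
qed

lemma colour_cost_delete_second:
  assumes "k < length ns" "ns ! k \<in> {4, 6}" "count_list ns 1 = 0"
  shows "colour_cost (delete_vertex ns k 1) = colour_cost ns"
  using colour_cost_delete_vertex[OF assms(1), of 1] count_list_delete_vertex[OF assms(1), of 1] assms(2,3)
  by (auto simp: colour_width_def)

definition critical_shape :: "nat list \<Rightarrow> bool" where
  "critical_shape ns \<longleftrightarrow> set ns \<subseteq> {1, 2, 4, 6} \<and> count_list ns 1 \<le> 1 \<and>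
     (count_list ns 1 = 0 \<longrightarrow> set ns \<subseteq> {2})"

lemma critical_shapeI:
  assumes pos: "\<forall>s\<in>set ns. 1 \<le> s"
    and decrease: "\<And>k i. k < length ns \<Longrightarrow> i < ns ! k \<Longrightarrow>
      colour_cost (delete_vertex ns k i) < colour_cost ns"
  shows "critical_shape ns"
proof -
  have lengths: "ns ! k \<in> {1, 2, 4, 6}" if k: "k < length ns" for k
  proof (rule ccontr)
    assume "ns ! k \<notin> {1, 2, 4, 6}"
    moreover have "1 \<le> ns ! k" using pos k by simp
    moreover have "(if ns ! k = 3 then 0 else 2) < ns ! k" using calculation by auto
    ultimately show False
      using colour_cost_delete_odd_or_long[OF k] decrease[OF k, of "if ns ! k = 3 then 0 else 2"]
      by simp
  qed
  have isolated: "count_list ns 1 \<le> 1"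
  proof (rule ccontr)
    assume many: "\<not> count_list ns 1 \<le> 1"
    then have "1 \<in> set ns" using count_list_0_iff[of ns 1] by linarith
    then obtain k where k: "k < length ns" "ns ! k = 1" by (metis in_set_conv_nth)
    then show False
      using colour_cost_delete_isolated[OF k] decrease[OF k(1), of 0] many by simp
  qed
  have twos: "ns ! k = 2" if none: "count_list ns 1 = 0" and k: "k < length ns" for k
  proof (rule ccontr)
    assume "ns ! k \<noteq> 2"
    moreover have "ns ! k \<noteq> 1" using none nth_mem[OF k] by (auto simp: count_list_0_iff)
    ultimately have "ns ! k \<in> {4, 6}" using lengths[OF k] by simp
    then show False
      using colour_cost_delete_second[OF k _ none] decrease[OF k, of 1] by auto
  qed
  have "set ns \<subseteq> {1, 2, 4, 6}" unfolding set_conv_nth using lengths by blast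
  moreover have "count_list ns 1 = 0 \<Longrightarrow> set ns \<subseteq> {2}" unfolding set_conv_nth using twos by blast
  ultimately show ?thesis using isolated by (simp add: critical_shape_def)
qed

text \<open>The least decrease of the colour cost under a single vertex deletion, for a forest
  of critical shape.\<close>

definition deletion_slack :: "nat list \<Rightarrow> nat" where
  "deletion_slack ns = (if count_list ns 1 = 0 \<or> 6 \<in> set ns then 1 else 2)"

lemma critical_shape_delete_bound:
  assumes shape: "critical_shape ns" and k: "k < length ns" and i: "i < ns ! k"
  shows "colour_cost (delete_vertex ns k i) + deletion_slack ns \<le> colour_cost ns"
proof -
  have "ns ! k \<in> set ns" using k by simp
  then have s: "ns ! k \<in> {1, 2, 4, 6}" "count_list ns 1 = 0 \<and> ns ! k = 2 \<or> count_list ns 1 = 1"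
    "ns ! k = 6 \<Longrightarrow> 6 \<in> set ns"
    using shape by (auto simp: critical_shape_def)
  then have "i \<in> {0, 1, 2, 3, 4, 5}" using i by auto
  then show ?thesis
    using colour_cost_delete_vertex[OF k, of i] count_list_delete_vertex[OF k, of i] s i
    by (auto simp: deletion_slack_def colour_width_def)
qed

lemma critical_shape_delete_bound_attained:
  assumes shape: "critical_shape ns" and "ns \<noteq> []"
  shows "\<exists>k < length ns. \<exists>i < ns ! k.
    colour_cost (delete_vertex ns k i) + deletion_slack ns = colour_cost ns"
proof -
  have count: "count_list ns 1 = 0 \<and> set ns \<subseteq> {2} \<or> count_list ns 1 = 1"
    using shape by (auto simp: critical_shape_def)
  obtain k where k: "k < length ns"
    and kind: "ns ! k = 6 \<or> ns ! k = 2 \<and> count_list ns 1 = 0 \<or>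
      ns ! k = 1 \<and> count_list ns 1 = 1 \<and> 6 \<notin> set ns"
  proof (cases "6 \<in> set ns")
    case True
    then obtain k where "k < length ns" "ns ! k = 6" by (auto simp: in_set_conv_nth)
    then show ?thesis using that by simp
  next
    case False
    show ?thesis
    proof (cases "count_list ns 1 = 0")
      case True
      have "ns ! 0 \<in> set ns" using \<open>ns \<noteq> []\<close> by simp
      moreover have "set ns \<subseteq> {2}" using count True by simp
      ultimately have "ns ! 0 = 2" by blast
      then show ?thesis using that[of 0] True \<open>ns \<noteq> []\<close> by simp
    next
      case no_isolated: False
      then have "1 \<in> set ns" by (simp add: count_list_0_iff)
      then obtain k where "k < length ns" "ns ! k = 1" by (auto simp: in_set_conv_nth)
      moreover have "count_list ns 1 = 1" using count no_isolated by auto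
      ultimately show ?thesis using that False by simp
    qed
  qed
  moreover have "ns ! k = 6 \<Longrightarrow> 6 \<in> set ns" using nth_mem[OF k] by simp
  ultimately have "colour_cost (delete_vertex ns k 0) + deletion_slack ns = colour_cost ns"
    using colour_cost_delete_vertex[OF k, of 0] count_list_delete_vertex[OF k, of 0]
    by (auto simp: deletion_slack_def colour_width_def)
  moreover have "0 < ns ! k" using kind by auto
  ultimately show ?thesis using k by blast
qed

lemma embed_cost_eq_colour_cost:
  assumes "critical_shape ns"
  shows "embed_cost ns = colour_cost ns"
proof -
  have "3 \<notin> set ns" "count_list ns 1 \<le> 1" using assms by (auto simp: critical_shape_def)
  moreover have "embed_cost ns = (\<Sum>s\<leftarrow>ns. colour_width s) + 2 * count_list ns 1" if "3 \<notin> set ns"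
    using that by (induction ns) (auto simp: embed_cost_def embed_width_def colour_width_def)
  ultimately show ?thesis by (auto simp: colour_cost_count_list)
qed

lemma obstruction_cost_iff:
  assumes pos: "\<forall>s\<in>set ns. 1 \<le> s"
  shows "(n + 1 < colour_cost ns \<and>
      (\<forall>k < length ns. \<forall>i < ns ! k. colour_cost (delete_vertex ns k i) \<le> n + 1)) \<longleftrightarrow>
    critical_shape ns \<and> n + 1 < colour_cost ns \<and> colour_cost ns \<le> n + 1 + deletion_slack ns"
proof
  assume obs: "n + 1 < colour_cost ns \<and>
    (\<forall>k < length ns. \<forall>i < ns ! k. colour_cost (delete_vertex ns k i) \<le> n + 1)"
  then have shape: "critical_shape ns" by (intro critical_shapeI[OF pos]) fastforce
  have "ns \<noteq> []" using obs by (auto simp: colour_cost_def)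
  then obtain k i where "k < length ns" "i < ns ! k"
    "colour_cost (delete_vertex ns k i) + deletion_slack ns = colour_cost ns"
    using critical_shape_delete_bound_attained[OF shape] by blast
  then show "critical_shape ns \<and> n + 1 < colour_cost ns \<and> colour_cost ns \<le> n + 1 + deletion_slack ns"
    using shape obs by fastforce
next
  assume "critical_shape ns \<and> n + 1 < colour_cost ns \<and> colour_cost ns \<le> n + 1 + deletion_slack ns"
  then show "n + 1 < colour_cost ns \<and>
      (\<forall>k < length ns. \<forall>i < ns ! k. colour_cost (delete_vertex ns k i) \<le> n + 1)"
    using critical_shape_delete_bound by fastforce
qed

lemma critical_shape_slack_classification:
  "critical_shape ns \<and> n + 1 < c \<and> c \<le> n + 1 + deletion_slack ns \<longleftrightarrow>
    (c - 1 = n + 1 \<and> (\<forall>k\<in>set ns. k = 2))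
    \<or> (c - 1 = n + 1 \<and> (\<forall>k\<in>set ns. k \<in> {1, 2, 4, 6}) \<and> count_list ns 1 = 1)
    \<or> (c - 1 = n + 2 \<and> (\<forall>k\<in>set ns. k \<in> {1, 2, 4}) \<and> count_list ns 1 = 1)"
  (is "?lhs \<longleftrightarrow> ?two \<or> ?with_six \<or> ?without_six")
proof
  assume ?lhs
  then have shape: "set ns \<subseteq> {1, 2, 4, 6}" "count_list ns 1 = 0 \<and> set ns \<subseteq> {2} \<or> count_list ns 1 = 1"
    and bounds: "n + 1 < c" "c \<le> n + 1 + deletion_slack ns"
    by (auto simp: critical_shape_def)
  show "?two \<or> ?with_six \<or> ?without_six"
  proof (cases "count_list ns 1 = 0")
    case True
    then show ?thesis using shape bounds by (auto simp: deletion_slack_def)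
  next
    case False
    then have "count_list ns 1 = 1" using shape by simp
    then show ?thesis using shape bounds by (cases "6 \<in> set ns") (auto simp: deletion_slack_def)
  qed
next
  assume "?two \<or> ?with_six \<or> ?without_six"
  then show ?lhs
  proof (elim disjE conjE)
    assume "c - 1 = n + 1" "\<forall>k\<in>set ns. k = 2"
    moreover from this have "count_list ns 1 = 0" by (auto simp: count_list_0_iff)
    ultimately show ?lhs by (auto simp: critical_shape_def deletion_slack_def)
  next
    assume "c - 1 = n + 1" "\<forall>k\<in>set ns. k \<in> {1, 2, 4, 6}" "count_list ns 1 = 1"
    then show ?lhs by (auto simp: critical_shape_def deletion_slack_def)
  next
    assume "c - 1 = n + 2" "\<forall>k\<in>set ns. k \<in> {1, 2, 4}" "count_list ns 1 = 1"
    moreover from this have "6 \<notin> set ns" by auto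
    ultimately show ?lhs by (auto simp: critical_shape_def deletion_slack_def)
  qed
qed

lemma critical_shape_if_classified:
  "(\<forall>k\<in>set ns. k = 2) \<or> (\<forall>k\<in>set ns. k \<in> {1, 2, 4, 6}) \<and> count_list ns 1 = 1 \<Longrightarrow>
    critical_shape ns"
proof (elim disjE conjE)
  assume "\<forall>k\<in>set ns. k = 2"
  moreover from this have "count_list ns 1 = 0" by (auto simp: count_list_0_iff)
  ultimately show "critical_shape ns" by (auto simp: critical_shape_def)
qed (auto simp: critical_shape_def)

theorem proposition2p5:
  fixes ns :: "nat list" and n :: nat
  assumes "\<forall>k\<in>set ns. k \<ge> 1"
    and "n \<ge> 1"
  shows "min_obs (linear_forest ns) (path_graph n) \<longleftrightarrow>
    ((mu (linear_forest ns) = n + 1 \<and> (\<forall>k\<in>set ns. k = 2))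
     \<or> (mu (linear_forest ns) = n + 1 \<and> (\<forall>k\<in>set ns. k \<in> {1, 2, 4, 6}) \<and> count_list ns 1 = 1)
     \<or> (mu (linear_forest ns) = n + 2 \<and> (\<forall>k\<in>set ns. k \<in> {1, 2, 4}) \<and> count_list ns 1 = 1))"
proof -
  have "min_obs (linear_forest ns) (path_graph n) \<longleftrightarrow>
      critical_shape ns \<and> n + 1 < colour_cost ns \<and> colour_cost ns \<le> n + 1 + deletion_slack ns"
    using min_obs_linear_forest_iff obstruction_cost_iff[OF assms(1)] by simp
  also have "\<dots> \<longleftrightarrow>
    ((colour_cost ns - 1 = n + 1 \<and> (\<forall>k\<in>set ns. k = 2))
     \<or> (colour_cost ns - 1 = n + 1 \<and> (\<forall>k\<in>set ns. k \<in> {1, 2, 4, 6}) \<and> count_list ns 1 = 1)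
     \<or> (colour_cost ns - 1 = n + 2 \<and> (\<forall>k\<in>set ns. k \<in> {1, 2, 4}) \<and> count_list ns 1 = 1))"
    by (rule critical_shape_slack_classification)
  also have "\<dots> \<longleftrightarrow>
    ((mu (linear_forest ns) = n + 1 \<and> (\<forall>k\<in>set ns. k = 2))
     \<or> (mu (linear_forest ns) = n + 1 \<and> (\<forall>k\<in>set ns. k \<in> {1, 2, 4, 6}) \<and> count_list ns 1 = 1)
     \<or> (mu (linear_forest ns) = n + 2 \<and> (\<forall>k\<in>set ns. k \<in> {1, 2, 4}) \<and> count_list ns 1 = 1))"
  proof (cases "critical_shape ns")
    case True
    then show ?thesis by (simp add: mu_linear_forest embed_cost_eq_colour_cost)
  next
    case False
    then show ?thesis using critical_shape_if_classified by auto
  qed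
  finally show ?thesis .
qed

end
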